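(* Let $n\ge4$ and $\sigma=(\sigma_1,\dots,\sigma_{n-2})\in\Sigma_n$. Then the alter ego $\underset{\sim}{\mathbf C}_n^{\sigma}=(C_n;\sigma_1,\dots,\sigma_{n-2},\mathscr T)$ yields a duality on $\mathcal G_n$, i.e. for every $\mathbf A\in\mathcal G_n$ the evaluation map $e_{\mathbf A}\colon\mathbf A\to E^\sigma D^\sigma(\mathbf A)$ is an isomorphism.
   Context: $\mathbf C_n$ is the Heyting algebra whose universe is the chain $\{0<1<\dots<n-1\}$, with lattice operations min and max, $\bot=0$, $\top=n-1$, and $a\to b=\top$ if $a\le b$, $a\to b=b$ if $b<a$. $\mathcal G_n$ is the class of algebras isomorphic to subalgebras of direct powers of $\mathbf C_n$; $\mathcal G_n(\mathbf A,\mathbf C_n)$ is the set of Heyting homomorphisms $\mathbf A\to\mathbf C_n$. For $n\ge4$: for $1\le i\le n-2$, $h_i$ is the endomorphism of $\mathbf C_n$ with $h_i(k)=k+1$ if $i\le k<n-1$ and $h_i(k)=k$ otherwise. For $1\le i\le n-3$, $g_i$ is the partial map with domain $C_n\setminus\{i\}$ given by $g_i(i+1)=i$ and $g_i(k)=k$ for $k\notin\{i,i+1\}$, and $f_i\colon C_n\setminus\{i+1\}\to C_n\setminus\{i\}$ is its inverse; these are partial endomorphisms (homomorphisms from a subalgebra of $\mathbf C_n$ into $\mathbf C_n$). $\Sigma_n=\{f_1,g_1\}\times\dots\times\{f_{n-3},g_{n-3}\}\times\{h_1,\dots,h_{n-2}\}$. Natural duality set-up: for an alter ego $(C_n;P,\mathscr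 T)$ with $P$ a set of total and partial endomorphisms and $\mathscr T$ discrete, powers carry the product topology and pointwise-lifted operations ($p^S(x)=p\circ x$, defined iff $x(s)\in\operatorname{dom}p$ for all $s$); a substructure is a subset closed under these (partial) operations wherever defined; $\mathcal X$ is the class of topological structures isomorphic to closed substructures of powers (empty one included), with morphisms the continuous maps $\varphi$ preserving total operations and such that, for partial $p$, $x\in\operatorname{dom}p^{\mathbf X}$ implies $\varphi(x)\in\operatorname{dom}p^{\mathbf Y}$ and $\varphi(p^{\mathbf X}(x))=p^{\mathbf Y}(\varphi(x))$. $D(\mathbf A)=\mathcal G_n(\mathbf A,\mathbf C_n)$ as a closed substructure of the power with exponent $A$; $E(\mathbf X)$ is the set of $\mathcal X$-morphisms from $\mathbf X$ to the alter ego, as a subalgebra of $\mathbf C_n^X$; $e_{\mathbf A}(a)(x)=x(a)$. $D^\sigma,E^\sigma$ denote these functors for the alter ego $\underset{\sim}{\mathbf C}_n^{\sigma}$. *)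

theory Defs
  imports "HOL-Analysis.Analysis"
begin

record 'a halg =
  hcar :: "'a set"
  hmeet :: "'a \<Rightarrow> 'a \<Rightarrow> 'a"
  hjoin :: "'a \<Rightarrow> 'a \<Rightarrow> 'a"
  himp :: "'a \<Rightarrow> 'a \<Rightarrow> 'a"
  hbot :: 'a
  htop :: 'a

definition is_halg :: "'a halg \<Rightarrow> bool" where
  "is_halg A \<longleftrightarrow> hbot A \<in> hcar A \<and> htop A \<in> hcar A \<and>
     (\<forall>a\<in>hcar A. \<forall>b\<in>hcar A. hmeet A a b \<in> hcar A \<and> hjoin A a b \<in> hcar A \<and> himp A a b \<in> hcar A)"

definition hhom :: "'a halg \<Rightarrow> 'b halg \<Rightarrow> ('a \<Rightarrow> 'b) \<Rightarrow> bool" where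
  "hhom A B f \<longleftrightarrow> (\<forall>a\<in>hcar A. f a \<in> hcar B) \<and> f (hbot A) = hbot B \<and> f (htop A) = htop B \<and>
     (\<forall>a\<in>hcar A. \<forall>b\<in>hcar A. f (hmeet A a b) = hmeet B (f a) (f b) \<and>
        f (hjoin A a b) = hjoin B (f a) (f b) \<and> f (himp A a b) = himp B (f a) (f b))"

definition Cn :: "nat \<Rightarrow> nat halg" where
  "Cn n = \<lparr>hcar = {..<n}, hmeet = min, hjoin = max,
           himp = (\<lambda>a b. if a \<le> b then n - 1 else b), hbot = 0, htop = n - 1\<rparr>"

definition cpow :: "nat \<Rightarrow> 'i set \<Rightarrow> ('i \<Rightarrow> nat) halg" where
  "cpow n I = \<lparr>hcar = I \<rightarrow>\<^sub>E {..<n},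
     hmeet = (\<lambda>x y. restrict (\<lambda>i. hmeet (Cn n) (x i) (y i)) I),
     hjoin = (\<lambda>x y. restrict (\<lambda>i. hjoin (Cn n) (x i) (y i)) I),
     himp = (\<lambda>x y. restrict (\<lambda>i. himp (Cn n) (x i) (y i)) I),
     hbot = restrict (\<lambda>i. hbot (Cn n)) I,
     htop = restrict (\<lambda>i. htop (Cn n)) I\<rparr>"

text \<open>D(A) = G_n(A, C_n), as a subset of the power C_n^A, with the induced product topology.\<close>
definition homs :: "nat \<Rightarrow> 'a halg \<Rightarrow> ('a \<Rightarrow> nat) set" where
  "homs n A = {x \<in> hcar A \<rightarrow>\<^sub>E {..<n}. hhom A (Cn n) x}"

definition Dtop :: "nat \<Rightarrow> 'a halg \<Rightarrow> ('a \<Rightarrow> nat) topology" where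
  "Dtop n A = subtopology (product_topology (\<lambda>_. discrete_topology {..<n}) (hcar A)) (homs n A)"

text \<open>Partial operations on C_n: pairs (domain, map). A total operation has domain {..<n}.\<close>
type_synonym pop = "nat set \<times> (nat \<Rightarrow> nat)"

definition h_op :: "nat \<Rightarrow> nat \<Rightarrow> nat \<Rightarrow> nat" where
  "h_op n i k = (if i \<le> k \<and> k < n - 1 then k + 1 else k)"

definition g_op :: "nat \<Rightarrow> nat \<Rightarrow> pop" where
  "g_op n i = ({..<n} - {i}, \<lambda>k. if k = i + 1 then i else k)"

definition f_op :: "nat \<Rightarrow> nat \<Rightarrow> pop" where
  "f_op n i = ({..<n} - {i + 1}, \<lambda>k. if k = i then i + 1 else k)"

text \<open>The operations of the alter ego for sigma in Sigma_n: for each i in 1..n-3 the choice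
  c i = True selects f_i and c i = False selects g_i; the last component is h_j.\<close>
definition sigma_ops :: "nat \<Rightarrow> (nat \<Rightarrow> bool) \<Rightarrow> nat \<Rightarrow> pop set" where
  "sigma_ops n c j = {(if c i then f_op n i else g_op n i) | i. i \<in> {1..n-3}} \<union> {({..<n}, h_op n j)}"

text \<open>Morphisms from a closed substructure X of a power C_n^S (topology T) to the alter ego
  with (partial) operations P and discrete topology.\<close>
definition is_morph :: "nat \<Rightarrow> pop set \<Rightarrow> 's set \<Rightarrow> ('s \<Rightarrow> nat) set \<Rightarrow> ('s \<Rightarrow> nat) topology
    \<Rightarrow> (('s \<Rightarrow> nat) \<Rightarrow> nat) \<Rightarrow> bool" where
  "is_morph n P S X T \<phi> \<longleftrightarrow> continuous_map T (discrete_topology {..<n}) \<phi> \<and>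
     (\<forall>(d, p)\<in>P. \<forall>x\<in>X. x ` S \<subseteq> d \<longrightarrow>
        \<phi> x \<in> d \<and> \<phi> (restrict (p \<circ> x) S) = p (\<phi> x))"

definition Edual :: "nat \<Rightarrow> pop set \<Rightarrow> 's set \<Rightarrow> ('s \<Rightarrow> nat) set \<Rightarrow> ('s \<Rightarrow> nat) topology
    \<Rightarrow> (('s \<Rightarrow> nat) \<Rightarrow> nat) set" where
  "Edual n P S X T = {\<phi> \<in> X \<rightarrow>\<^sub>E {..<n}. is_morph n P S X T \<phi>}"

definition ev :: "('a \<Rightarrow> nat) set \<Rightarrow> 'a \<Rightarrow> ('a \<Rightarrow> nat) \<Rightarrow> nat" where
  "ev X a = restrict (\<lambda>x. x a) X"

end

theory Submission
  imports Defs
begin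

text \<open>Let \<open>\<phi>\<close> be a morphism from \<open>D(A)\<close> to the alter ego. Since \<open>f\<^sub>i\<close> and \<open>g\<^sub>i\<close> are mutually
  inverse, \<open>\<phi>\<close> preserves both, hence also their composites, which are the identities on the
  subalgebras \<open>C\<^sub>n - {i}\<close>; so \<open>\<phi>\<close> respects every subalgebra of \<open>C\<^sub>n\<close>. A partial endomorphism that
  sends only the top to the top is a composite of restrictions of the \<open>f\<^sub>i\<close> and \<open>g\<^sub>i\<close> (induction on
  its distance from the identity), and \<open>h\<^sub>j\<close> merges the largest non-top element into the top
  (induction on the size of the domain). Hence \<open>\<phi>\<close> preserves all partial endomorphisms of \<open>C\<^sub>n\<close>.

  This forces \<open>\<phi>\<close> to agree with an evaluation at any two points \<open>x, y\<close> of \<open>D(A)\<close>: the image of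
  \<open>A\<close> under \<open>(x, y)\<close> is a rectangle above two cut points glued to the graph of a bijection below
  them, so truncating \<open>x\<close> at its cut point factors through \<open>y\<close> by a partial endomorphism.
  Compactness of \<open>D(A)\<close> turns these pairwise interpolants into a single \<open>a\<close> with \<open>\<phi> = e\<^sub>A(a)\<close>:
  a finite meet gives a lower bound agreeing with \<open>\<phi>\<close> at one point, and a finite join of such
  lower bounds agrees everywhere. Injectivity of \<open>e\<^sub>A\<close> comes from the embedding of \<open>A\<close> into a
  power of \<open>C\<^sub>n\<close>.\<close>

lemma
  assumes "is_halg A"
  shows halg_bot_in: "hbot A \<in> hcar A" and halg_top_in: "htop A \<in> hcar A"
    and halg_meet_in: "\<And>a b. a \<in> hcar A \<Longrightarrow> b \<in> hcar A \<Longrightarrow> hmeet A a b \<in> hcar A"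
    and halg_join_in: "\<And>a b. a \<in> hcar A \<Longrightarrow> b \<in> hcar A \<Longrightarrow> hjoin A a b \<in> hcar A"
    and halg_imp_in: "\<And>a b. a \<in> hcar A \<Longrightarrow> b \<in> hcar A \<Longrightarrow> himp A a b \<in> hcar A"
  using assms by (auto simp: is_halg_def)

lemma
  assumes "x \<in> homs n A"
  shows homs_PiE: "x \<in> hcar A \<rightarrow>\<^sub>E {..<n}"
    and homs_less: "\<And>a. a \<in> hcar A \<Longrightarrow> x a < n"
    and homs_bot: "x (hbot A) = 0" and homs_top: "x (htop A) = n - 1"
    and homs_meet: "\<And>a b. a \<in> hcar A \<Longrightarrow> b \<in> hcar A \<Longrightarrow> x (hmeet A a b) = min (x a) (x b)"
    and homs_join: "\<And>a b. a \<in> hcar A \<Longrightarrow> b \<in> hcar A \<Longrightarrow> x (hjoin A a b) = max (x a) (x b)"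
    and homs_imp: "\<And>a b. a \<in> hcar A \<Longrightarrow> b \<in> hcar A \<Longrightarrow>
                     x (himp A a b) = (if x a \<le> x b then n - 1 else x b)"
  using assms by (auto simp: homs_def hhom_def Cn_def)

lemma homs_image:
  assumes "x \<in> homs n A" "is_halg A"
  shows "x ` hcar A \<subseteq> {..<n}" "0 \<in> x ` hcar A" "n - 1 \<in> x ` hcar A"
proof -
  show "x ` hcar A \<subseteq> {..<n}" using homs_less[OF assms(1)] by auto
  show "0 \<in> x ` hcar A" "n - 1 \<in> x ` hcar A"
    using homs_bot[OF assms(1)] homs_top[OF assms(1)] halg_bot_in[OF assms(2)]
      halg_top_in[OF assms(2)]
    by (metis image_eqI)+
qed

lemma homs_meet_exists:
  assumes A: "is_halg A" and G: "finite G" "G \<noteq> {}" and f: "\<And>y. y \<in> G \<Longrightarrow> f y \<in> hcar A"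
  shows "\<exists>b\<in>hcar A. \<forall>z\<in>homs n A. z b = Min ((\<lambda>y. z (f y)) ` G)"
  using G f
proof (induction G rule: finite_ne_induct)
  case (insert y G)
  then obtain b where b: "b \<in> hcar A" "\<forall>z\<in>homs n A. z b = Min ((\<lambda>y. z (f y)) ` G)" by auto
  have "f y \<in> hcar A" using insert by auto
  then show ?case
    using halg_meet_in[OF A _ b(1)] homs_meet[OF _ _ b(1)] b(2) insert by (auto simp: Min_insert)
qed auto

lemma homs_join_exists:
  assumes A: "is_halg A" and G: "finite G" "G \<noteq> {}" and f: "\<And>y. y \<in> G \<Longrightarrow> f y \<in> hcar A"
  shows "\<exists>b\<in>hcar A. \<forall>z\<in>homs n A. z b = Max ((\<lambda>y. z (f y)) ` G)"
  using G f
proof (induction G rule: finite_ne_induct)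
  case (insert y G)
  then obtain b where b: "b \<in> hcar A" "\<forall>z\<in>homs n A. z b = Max ((\<lambda>y. z (f y)) ` G)" by auto
  have "f y \<in> hcar A" using insert by auto
  then show ?case
    using halg_join_in[OF A _ b(1)] homs_join[OF _ _ b(1)] b(2) insert by (auto simp: Max_insert)
qed auto

section \<open>Partial endomorphisms of \<open>C\<^sub>n\<close>\<close>

text \<open>A partial endomorphism of \<open>C\<^sub>n\<close>: a homomorphism from a subalgebra \<open>D\<close> of \<open>C\<^sub>n\<close> into \<open>C\<^sub>n\<close>.
  The subuniverses of \<open>C\<^sub>n\<close> are exactly the sets containing \<open>0\<close> and \<open>n - 1\<close>; the last clause
  is preservation of \<open>\<rightarrow>\<close>.\<close>
definition partial_endo :: "nat \<Rightarrow> nat set \<Rightarrow> (nat \<Rightarrow> nat) \<Rightarrow> bool" where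
  "partial_endo n D u \<longleftrightarrow> D \<subseteq> {..<n} \<and> 0 \<in> D \<and> n - 1 \<in> D \<and> u 0 = 0 \<and> u (n - 1) = n - 1 \<and>
     (\<forall>s\<in>D. u s < n) \<and> (\<forall>s\<in>D. \<forall>t\<in>D. s \<le> t \<longrightarrow> u s \<le> u t) \<and>
     (\<forall>s\<in>D. \<forall>t\<in>D. t < s \<longrightarrow> u t < u s \<or> u t = n - 1)"

definition preserves :: "nat \<Rightarrow> 'a halg \<Rightarrow> (('a \<Rightarrow> nat) \<Rightarrow> nat) \<Rightarrow> nat set \<Rightarrow> (nat \<Rightarrow> nat) \<Rightarrow> bool"
  where
  "preserves n A \<phi> D u \<longleftrightarrow> (\<forall>x\<in>homs n A. x ` hcar A \<subseteq> D \<longrightarrow>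
      \<phi> x \<in> D \<and> \<phi> (restrict (u \<circ> x) (hcar A)) = u (\<phi> x))"

lemma partial_endo_comp_homs:
  assumes x: "x \<in> homs n A" and A: "is_halg A" and xD: "x ` hcar A \<subseteq> D"
    and u: "partial_endo n D u"
  shows "restrict (u \<circ> x) (hcar A) \<in> homs n A"
proof -
  have lt: "\<And>a. a \<in> hcar A \<Longrightarrow> u (x a) < n"
    and mono: "\<And>a b. a \<in> hcar A \<Longrightarrow> b \<in> hcar A \<Longrightarrow> x a \<le> x b \<Longrightarrow> u (x a) \<le> u (x b)"
    and imp: "\<And>a b. a \<in> hcar A \<Longrightarrow> b \<in> hcar A \<Longrightarrow> x b < x a \<Longrightarrow>
                 u (x b) < u (x a) \<or> u (x b) = n - 1"
    using u xD by (auto simp: partial_endo_def image_subset_iff)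
  have "hhom A (Cn n) (restrict (u \<circ> x) (hcar A))"
    unfolding hhom_def
  proof (intro conjI ballI)
    fix a b assume a: "a \<in> hcar A" and b: "b \<in> hcar A"
    note ab = halg_meet_in[OF A a b] halg_join_in[OF A a b] halg_imp_in[OF A a b]
    show "restrict (u \<circ> x) (hcar A) (hmeet A a b) =
        hmeet (Cn n) (restrict (u \<circ> x) (hcar A) a) (restrict (u \<circ> x) (hcar A) b)"
      using ab a b homs_meet[OF x a b] mono[OF a b] mono[OF b a]
      by (cases "x a \<le> x b") (auto simp: Cn_def min_def intro: le_antisym)
    show "restrict (u \<circ> x) (hcar A) (hjoin A a b) =
        hjoin (Cn n) (restrict (u \<circ> x) (hcar A) a) (restrict (u \<circ> x) (hcar A) b)"
      using ab a b homs_join[OF x a b] mono[OF a b] mono[OF b a]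
      by (cases "x a \<le> x b") (auto simp: Cn_def max_def intro: le_antisym)
    show "restrict (u \<circ> x) (hcar A) (himp A a b) =
        himp (Cn n) (restrict (u \<circ> x) (hcar A) a) (restrict (u \<circ> x) (hcar A) b)"
      using ab a b homs_imp[OF x a b] mono[OF a b] imp[OF a b] lt[OF a] lt[OF b] u
      by (auto simp add: Cn_def partial_endo_def)
  qed (use lt halg_bot_in[OF A] halg_top_in[OF A] homs_bot[OF x] homs_top[OF x] u
        in \<open>auto simp: Cn_def partial_endo_def\<close>)
  then show ?thesis
    using lt by (simp add: homs_def)
qed

lemma partial_endo_comp:
  assumes u: "partial_endo n D u" and w: "partial_endo n D' w" and uD: "u ` D \<subseteq> D'"
  shows "partial_endo n D (w \<circ> u)"
proof -
  have "w (u t) < w (u s) \<or> w (u t) = n - 1" if "s \<in> D" "t \<in> D" "t < s" for s t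
  proof -
    have "u t < u s \<or> u t = n - 1" using u that by (auto simp: partial_endo_def)
    moreover have "u s \<in> D'" "u t \<in> D'" using uD that by auto
    ultimately show ?thesis using w unfolding partial_endo_def by metis
  qed
  then show ?thesis using u w uD by (auto simp: partial_endo_def image_subset_iff)
qed

lemma partial_endo_subset:
  "partial_endo n D u \<Longrightarrow> D' \<subseteq> D \<Longrightarrow> 0 \<in> D' \<Longrightarrow> n - 1 \<in> D' \<Longrightarrow> partial_endo n D' u"
  unfolding partial_endo_def by blast

lemma partial_endo_id: "D \<subseteq> {..<n} \<Longrightarrow> 0 \<in> D \<Longrightarrow> n - 1 \<in> D \<Longrightarrow> partial_endo n D id"
  unfolding partial_endo_def by auto

lemma preserves_cong:
  assumes "preserves n A \<phi> D u" "D = D'" "\<And>s. s \<in> D' \<Longrightarrow> u s = u' s"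
  shows "preserves n A \<phi> D' u'"
  unfolding preserves_def
proof (intro ballI impI)
  fix x assume x: "x \<in> homs n A" "x ` hcar A \<subseteq> D'"
  have "restrict (u \<circ> x) (hcar A) = restrict (u' \<circ> x) (hcar A)"
    using x(2) assms(3) by (auto intro!: restrict_ext)
  then show "\<phi> x \<in> D' \<and> \<phi> (restrict (u' \<circ> x) (hcar A)) = u' (\<phi> x)"
    using assms x unfolding preserves_def by metis
qed

lemma preserves_comp:
  assumes A: "is_halg A" and u: "partial_endo n D u" "preserves n A \<phi> D u"
    and w: "preserves n A \<phi> D' w"
  shows "preserves n A \<phi> {s \<in> D. u s \<in> D'} (w \<circ> u)"
  unfolding preserves_def
proof (intro ballI impI)
  fix x assume x: "x \<in> homs n A" and xs: "x ` hcar A \<subseteq> {s \<in> D. u s \<in> D'}"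
  define x' where "x' = restrict (u \<circ> x) (hcar A)"
  have xD: "x ` hcar A \<subseteq> D" using xs by auto
  then have 1: "\<phi> x \<in> D" "\<phi> x' = u (\<phi> x)"
    using u(2) x unfolding preserves_def x'_def by auto
  have "x' \<in> homs n A" "x' ` hcar A \<subseteq> D'"
    using partial_endo_comp_homs[OF x A xD u(1)] xs by (auto simp: x'_def)
  then have 2: "\<phi> x' \<in> D'" "\<phi> (restrict (w \<circ> x') (hcar A)) = w (\<phi> x')"
    using w unfolding preserves_def by auto
  have "restrict (w \<circ> x') (hcar A) = restrict ((w \<circ> u) \<circ> x) (hcar A)"
    by (auto simp: x'_def intro!: restrict_ext)
  then show "\<phi> x \<in> {s \<in> D. u s \<in> D'} \<and> \<phi> (restrict ((w \<circ> u) \<circ> x) (hcar A)) = (w \<circ> u) (\<phi> x)"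
    using 1 2 by simp
qed

lemma preserves_factor:
  assumes A: "is_halg A" and r: "partial_endo n D r" "preserves n A \<phi> D r"
    and w: "preserves n A \<phi> (r ` D) w" and u: "\<And>t. t \<in> D \<Longrightarrow> u t = w (r t)"
  shows "preserves n A \<phi> D u"
  using preserves_comp[OF A r w] by (rule preserves_cong) (use u in auto)

lemma preserves_inverse:
  assumes A: "is_halg A" and u: "preserves n A \<phi> D u" and w: "partial_endo n D' w"
    and wD: "w ` D' \<subseteq> D" and uD: "u ` D \<subseteq> D'"
    and uw: "\<And>t. t \<in> D' \<Longrightarrow> u (w t) = t" and wu: "\<And>s. s \<in> D \<Longrightarrow> w (u s) = s"
  shows "preserves n A \<phi> D' w"
  unfolding preserves_def
proof (intro ballI impI)
  fix x assume x: "x \<in> homs n A" and xD: "x ` hcar A \<subseteq> D'"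
  define x' where "x' = restrict (w \<circ> x) (hcar A)"
  have "x' \<in> homs n A" "x' ` hcar A \<subseteq> D"
    using partial_endo_comp_homs[OF x A xD w] xD wD by (auto simp: x'_def)
  then have 2: "\<phi> x' \<in> D" "\<phi> (restrict (u \<circ> x') (hcar A)) = u (\<phi> x')"
    using u unfolding preserves_def by auto
  have "restrict (u \<circ> x') (hcar A) = restrict x (hcar A)"
    using xD uw by (auto simp: x'_def intro!: restrict_ext)
  also have "\<dots> = x"
    using homs_PiE[OF x] by (simp add: extensional_restrict)
  finally have "\<phi> x = u (\<phi> x')" using 2 by simp
  then show "\<phi> x \<in> D' \<and> \<phi> (restrict (w \<circ> x) (hcar A)) = w (\<phi> x)"
    using 2 uD wu by (auto simp: x'_def)
qed

lemma partial_endo_f: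
  "4 \<le> n \<Longrightarrow> i \<in> {1..n-3} \<Longrightarrow> partial_endo n ({..<n} - {i + 1}) (\<lambda>k. if k = i then i + 1 else k)"
  unfolding partial_endo_def by auto

lemma partial_endo_g:
  "4 \<le> n \<Longrightarrow> i \<in> {1..n-3} \<Longrightarrow> partial_endo n ({..<n} - {i}) (\<lambda>k. if k = i + 1 then i else k)"
  unfolding partial_endo_def by auto

lemma partial_endo_h_op: "4 \<le> n \<Longrightarrow> j \<in> {1..n-2} \<Longrightarrow> partial_endo n {..<n} (h_op n j)"
  unfolding partial_endo_def h_op_def by auto

lemma partial_endo_sigma_ops:
  assumes "4 \<le> n" "j \<in> {1..n-2}" "(d, p) \<in> sigma_ops n c j"
  shows "partial_endo n d p"
  using assms partial_endo_f[OF assms(1)] partial_endo_g[OF assms(1)]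
    partial_endo_h_op[OF assms(1,2)]
  unfolding sigma_ops_def f_op_def g_op_def by (auto split: if_splits)

lemma partial_endo_raise_max:
  assumes D: "D \<subseteq> {..<n}" "0 \<in> D" "n - 1 \<in> D"
    and s: "1 \<le> s" "s \<le> n - 2" and smax: "\<And>t. t \<in> D \<Longrightarrow> t \<noteq> n - 1 \<Longrightarrow> t \<le> s"
  shows "partial_endo n D (\<lambda>k. if k = s then n - 2 else k)"
  unfolding partial_endo_def
proof (intro conjI ballI impI)
  fix t t' assume t: "t \<in> D" and t': "t' \<in> D"
  have "t < n" "t' < n" using t t' D by auto
  then show "(if t = s then n - 2 else t) \<le> (if t' = s then n - 2 else t')" if "t \<le> t'"
    using that smax[OF t'] s by (cases "t' = n - 1"; cases "t = s"; auto)
  show "(if t' = s then n - 2 else t') < (if t = s then n - 2 else t) \<or>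
      (if t' = s then n - 2 else t') = n - 1" if "t' < t"
    using that smax[OF t] smax[OF t'] s \<open>t < n\<close> \<open>t' < n\<close>
    by (cases "t = n - 1"; cases "t' = s"; auto)
qed (use assms in auto)

lemma partial_endo_h_op_inverse:
  assumes E: "E \<subseteq> {..<n}" "0 \<in> E" "n - 1 \<in> E" and j: "j \<notin> E" "1 \<le> j"
  shows "partial_endo n E (\<lambda>t. if t = n - 1 then n - 1 else if j < t then t - 1 else t)"
  unfolding partial_endo_def
proof (intro conjI ballI impI)
  fix t t' assume t: "t \<in> E" and t': "t' \<in> E"
  have "t < n" "t' < n" "t \<noteq> j" "t' \<noteq> j" using t t' E j by auto
  then show "(if t = n - 1 then n - 1 else if j < t then t - 1 else t) \<le>
       (if t' = n - 1 then n - 1 else if j < t' then t' - 1 else t')" if "t \<le> t'"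
    using that by auto
  show "(if t' = n - 1 then n - 1 else if j < t' then t' - 1 else t') <
       (if t = n - 1 then n - 1 else if j < t then t - 1 else t) \<or>
       (if t' = n - 1 then n - 1 else if j < t' then t' - 1 else t') = n - 1" if "t' < t"
    using that \<open>t < n\<close> \<open>t \<noteq> j\<close> \<open>t' \<noteq> j\<close> by auto
qed (use assms in auto)

text \<open>Each summand is \<open>|u t - v t|\<close>, written with truncated subtraction.\<close>
definition displacement :: "nat set \<Rightarrow> (nat \<Rightarrow> nat) \<Rightarrow> (nat \<Rightarrow> nat) \<Rightarrow> nat" where
  "displacement D u v = (\<Sum>t\<in>D. (u t - v t) + (v t - u t))"

section \<open>Pairs of homomorphisms into \<open>C\<^sub>n\<close>\<close>

lemma partial_endo_factor_homs:
  assumes A: "is_halg A" and y: "y \<in> homs n A" and z: "z \<in> homs n A"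
    and vz: "\<And>a. a \<in> hcar A \<Longrightarrow> v (y a) = z a"
  shows "partial_endo n (y ` hcar A) v"
  unfolding partial_endo_def
proof (intro conjI ballI impI)
  show "y ` hcar A \<subseteq> {..<n}" "0 \<in> y ` hcar A" "n - 1 \<in> y ` hcar A"
    using homs_image[OF y A] by auto
  show "v 0 = 0" "v (n - 1) = n - 1"
    using vz[OF halg_bot_in[OF A]] vz[OF halg_top_in[OF A]] homs_bot[OF y] homs_bot[OF z]
      homs_top[OF y] homs_top[OF z] by simp_all
next
  fix s t assume "s \<in> y ` hcar A" "t \<in> y ` hcar A"
  then obtain a b where a: "a \<in> hcar A" "s = y a" and b: "b \<in> hcar A" "t = y b" by blast
  show "v s < n" using vz[OF a(1)] homs_less[OF z a(1)] a(2) by simp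
  show "v s \<le> v t" if "s \<le> t"
  proof -
    have "v s = v (y (hmeet A a b))" using homs_meet[OF y a(1) b(1)] that a b by simp
    also have "\<dots> = min (z a) (z b)"
      using vz halg_meet_in[OF A a(1) b(1)] homs_meet[OF z a(1) b(1)] by simp
    finally show ?thesis using vz a b by simp
  qed
  show "v t < v s \<or> v t = n - 1" if "t < s"
  proof -
    have "v t = v (y (himp A a b))" using homs_imp[OF y a(1) b(1)] that a b by simp
    also have "\<dots> = (if z a \<le> z b then n - 1 else z b)"
      using vz halg_imp_in[OF A a(1) b(1)] homs_imp[OF z a(1) b(1)] by simp
    finally show ?thesis using vz a b by (auto split: if_splits)
  qed
qed

definition cutoff :: "nat \<Rightarrow> nat \<Rightarrow> nat \<Rightarrow> nat" where
  "cutoff n s0 s = (if s0 \<le> s then n - 1 else s)"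

lemma partial_endo_cutoff:
  assumes "D \<subseteq> {..<n}" "0 \<in> D" "n - 1 \<in> D" "0 < s0" "s0 \<le> n - 1"
  shows "partial_endo n D (cutoff n s0)"
  using assms unfolding partial_endo_def cutoff_def by auto

text \<open>For homomorphisms \<open>x, y\<close> the image of \<open>(x, y)\<close> in \<open>C\<^sub>n \<times> C\<^sub>n\<close> is the rectangle
  \<open>[lower_cut x y, n - 1] \<times> [lower_cut y x, n - 1]\<close> together with the graph of a bijection between
  the values below the two cuts.\<close>
definition lower_cut :: "nat \<Rightarrow> 'a halg \<Rightarrow> ('a \<Rightarrow> nat) \<Rightarrow> ('a \<Rightarrow> nat) \<Rightarrow> nat" where
  "lower_cut n A x y = (LEAST s. \<exists>a\<in>hcar A. x a = s \<and> y a = n - 1)"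

locale homs_pair =
  fixes n :: nat and A :: "'a halg" and x y :: "'a \<Rightarrow> nat"
  assumes A: "is_halg A" and x: "x \<in> homs n A" and y: "y \<in> homs n A"
begin

lemma swap: "homs_pair n A y x"
  using A x y by unfold_locales

lemma lower_cut_attained: "\<exists>b\<in>hcar A. x b = lower_cut n A x y \<and> y b = n - 1"
  unfolding lower_cut_def
  by (rule LeastI_ex) (use halg_top_in[OF A] homs_top[OF y] in blast)

lemma lower_cut_le: "a \<in> hcar A \<Longrightarrow> y a = n - 1 \<Longrightarrow> lower_cut n A x y \<le> x a"
  unfolding lower_cut_def by (rule Least_le) blast

lemma lower_cut_le_top: "lower_cut n A x y \<le> n - 1"
  using lower_cut_le[OF halg_top_in[OF A]] homs_top[OF x] homs_top[OF y] by simp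

lemma lower_cut_reflect:
  assumes a: "a \<in> hcar A" "lower_cut n A x y \<le> x a"
  shows "lower_cut n A y x \<le> y a"
proof -
  obtain b where b: "b \<in> hcar A" "x b = lower_cut n A x y" "y b = n - 1"
    using lower_cut_attained by blast
  have "x (himp A b a) = n - 1" using homs_imp[OF x b(1) a(1)] b a by simp
  then have "lower_cut n A y x \<le> y (himp A b a)"
    by (intro homs_pair.lower_cut_le[OF swap halg_imp_in[OF A b(1) a(1)]])
  also have "\<dots> \<le> y a" using homs_imp[OF y b(1) a(1)] b homs_less[OF y a(1)] by simp
  finally show ?thesis .
qed

lemma below_lower_cut_mono:
  assumes ab: "a \<in> hcar A" "b \<in> hcar A" and below: "y a < lower_cut n A y x" and le: "y a \<le> y b"
  shows "x a \<le> x b"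
proof (rule ccontr)
  assume less: "\<not> x a \<le> x b"
  have "y (himp A a b) = n - 1" using homs_imp[OF y ab] le by simp
  then have "lower_cut n A x y \<le> x (himp A a b)" by (rule lower_cut_le[OF halg_imp_in[OF A ab]])
  also have "\<dots> \<le> x a" using homs_imp[OF x ab] less by simp
  finally have "lower_cut n A y x \<le> y a" by (rule lower_cut_reflect[OF ab(1)])
  then show False using below by simp
qed

lemma upper_block_attained:
  assumes b: "b \<in> hcar A" "lower_cut n A x y \<le> x b" and c: "c \<in> hcar A" "lower_cut n A y x \<le> y c"
  shows "\<exists>a\<in>hcar A. x a = x b \<and> y a = y c"
proof -
  obtain b0 where b0: "b0 \<in> hcar A" "x b0 = lower_cut n A x y" "y b0 = n - 1"
    using lower_cut_attained by blast
  obtain c0 where c0: "c0 \<in> hcar A" "y c0 = lower_cut n A y x" "x c0 = n - 1"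
    using homs_pair.lower_cut_attained[OF swap] by blast
  define r where "r = hjoin A b b0"
  define q where "q = hjoin A c c0"
  have rq: "r \<in> hcar A" "q \<in> hcar A"
    using halg_join_in[OF A] b c b0 c0 by (simp_all add: r_def q_def)
  have "x r = x b" "y r = n - 1" "x q = n - 1" "y q = y c"
    using homs_join[OF x] homs_join[OF y] b c b0 c0 homs_less[OF y b(1)] homs_less[OF x c(1)]
    by (auto simp: r_def q_def max_def)
  then have "x (hmeet A r q) = x b" "y (hmeet A r q) = y c"
    using homs_meet[OF x rq] homs_meet[OF y rq] homs_less[OF x b(1)] homs_less[OF y c(1)]
    by simp_all
  then show ?thesis using halg_meet_in[OF A rq] by blast
qed

lemma cutoff_lower_cut_factors:
  assumes ab: "a \<in> hcar A" "b \<in> hcar A" "y a = y b"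
  shows "cutoff n (lower_cut n A x y) (x a) = cutoff n (lower_cut n A x y) (x b)"
proof (cases "lower_cut n A x y \<le> x a")
  case True
  then have "lower_cut n A y x \<le> y b" using lower_cut_reflect[OF ab(1)] ab(3) by simp
  then have "lower_cut n A x y \<le> x b" by (rule homs_pair.lower_cut_reflect[OF swap ab(2)])
  then show ?thesis using True by (simp add: cutoff_def)
next
  case False
  then have "y a < lower_cut n A y x"
    using homs_pair.lower_cut_reflect[OF swap ab(1)] by linarith
  then have "x a = x b"
    using below_lower_cut_mono[OF ab(1,2)] below_lower_cut_mono[OF ab(2,1)] ab(3)
    by (simp add: le_antisym)
  then show ?thesis by simp
qed

lemma cutoff_factors_through:
  assumes "0 < lower_cut n A x y"
  obtains v where "partial_endo n (y ` hcar A) v"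
    "\<And>a. a \<in> hcar A \<Longrightarrow> v (y a) = cutoff n (lower_cut n A x y) (x a)"
proof
  define z where "z = restrict (cutoff n (lower_cut n A x y) \<circ> x) (hcar A)"
  define v where "v = (\<lambda>t. z (SOME a. a \<in> hcar A \<and> y a = t))"
  show vz: "v (y a) = cutoff n (lower_cut n A x y) (x a)" if a: "a \<in> hcar A" for a
  proof -
    have "(SOME b. b \<in> hcar A \<and> y b = y a) \<in> hcar A \<and> y (SOME b. b \<in> hcar A \<and> y b = y a) = y a"
      by (rule someI_ex) (use a in blast)
    then show ?thesis
      using cutoff_lower_cut_factors[OF a] by (auto simp: v_def z_def)
  qed
  have "partial_endo n (x ` hcar A) (cutoff n (lower_cut n A x y))"
    using homs_image[OF x A] assms lower_cut_le_top by (intro partial_endo_cutoff) auto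
  then have "z \<in> homs n A" unfolding z_def by (rule partial_endo_comp_homs[OF x A subset_refl])
  then show "partial_endo n (y ` hcar A) v"
    by (rule partial_endo_factor_homs[OF A y]) (simp add: vz z_def)
qed

end

section \<open>The topology of \<open>D(A)\<close>\<close>

lemma openin_finitely_determined:
  fixes U :: "'b set" and I :: "'i set"
  defines "P \<equiv> product_topology (\<lambda>_. discrete_topology U) I"
  assumes F: "finite F" "F \<subseteq> I" and dep: "\<And>z z'. \<forall>i\<in>F. z i = z' i \<Longrightarrow> Q z = Q z'"
  shows "openin P {z \<in> topspace P. Q z}"
proof (subst openin_subopen, intro ballI)
  fix z0 assume z0: "z0 \<in> {z \<in> topspace P. Q z}"
  define N where "N = PiE I (\<lambda>i. if i \<in> F then {z0 i} else U)"
  have "z0 \<in> N" using z0 by (auto simp: N_def P_def)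
  moreover have "openin P N"
    unfolding P_def N_def openin_PiE_gen
    using F z0 by (auto simp: P_def intro: finite_subset[OF _ F(1)])
  moreover have "N \<subseteq> {z \<in> topspace P. Q z}"
  proof
    fix z assume z: "z \<in> N"
    then have "z \<in> topspace P" using z0 F(2) by (auto simp: N_def P_def PiE_iff split: if_splits)
    moreover have "\<forall>i\<in>F. z i = z0 i" using z F(2) by (force simp: N_def PiE_iff)
    then have "Q z" using dep[of z z0] z0 by simp
    ultimately show "z \<in> {z \<in> topspace P. Q z}" by simp
  qed
  ultimately show "\<exists>T. openin P T \<and> z0 \<in> T \<and> T \<subseteq> {z \<in> topspace P. Q z}" by blast
qed

lemma closedin_finitely_determined:
  fixes U :: "'b set" and I :: "'i set"
  defines "P \<equiv> product_topology (\<lambda>_. discrete_topology U) I"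
  assumes "finite F" "F \<subseteq> I" "\<And>z z'. \<forall>i\<in>F. z i = z' i \<Longrightarrow> Q z = Q z'"
  shows "closedin P {z \<in> topspace P. Q z}"
proof -
  have "openin P {z \<in> topspace P. \<not> Q z}"
    unfolding P_def by (rule openin_finitely_determined[OF assms(2,3)]) (use assms(4) in metis)
  moreover have "topspace P - {z \<in> topspace P. Q z} = {z \<in> topspace P. \<not> Q z}" by blast
  ultimately show ?thesis by (simp add: closedin_def)
qed

lemma homs_closedin:
  assumes A: "is_halg A"
  shows "closedin (product_topology (\<lambda>_. discrete_topology {..<n}) (hcar A)) (homs n A)"
proof -
  let ?P = "product_topology (\<lambda>_. discrete_topology {..<n}) (hcar A)"
  define hom_at where "hom_at a b z \<longleftrightarrow> z (hbot A) = 0 \<and> z (htop A) = n - 1 \<and>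
     z (hmeet A a b) = min (z a) (z b) \<and> z (hjoin A a b) = max (z a) (z b) \<and>
     z (himp A a b) = (if z a \<le> z b then n - 1 else z b)" for a b and z :: "'a \<Rightarrow> nat"
  have homs_eq: "homs n A = (\<Inter>(a, b)\<in>hcar A \<times> hcar A. {z \<in> topspace ?P. hom_at a b z})"
  proof (intro equalityI subsetI)
    fix z assume "z \<in> homs n A"
    then show "z \<in> (\<Inter>(a, b)\<in>hcar A \<times> hcar A. {z \<in> topspace ?P. hom_at a b z})"
      by (auto simp: hom_at_def homs_PiE homs_bot homs_top homs_meet homs_join homs_imp)
  next
    fix z assume z: "z \<in> (\<Inter>(a, b)\<in>hcar A \<times> hcar A. {z \<in> topspace ?P. hom_at a b z})"
    then have "z \<in> hcar A \<rightarrow>\<^sub>E {..<n}" "\<forall>a\<in>hcar A. \<forall>b\<in>hcar A. hom_at a b z"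
      using halg_bot_in[OF A] by auto
    then show "z \<in> homs n A"
      using halg_bot_in[OF A] unfolding homs_def hhom_def hom_at_def Cn_def by (auto simp: PiE_iff)
  qed
  have "closedin ?P {z \<in> topspace ?P. hom_at a b z}" if "a \<in> hcar A" "b \<in> hcar A" for a b
    by (rule closedin_finitely_determined[where F = "{a, b, hbot A, htop A, hmeet A a b,
        hjoin A a b, himp A a b}"])
       (use that A in \<open>auto simp: hom_at_def halg_bot_in halg_top_in halg_meet_in halg_join_in
         halg_imp_in\<close>)
  then show ?thesis
    unfolding homs_eq using halg_bot_in[OF A] by (intro closedin_Inter) auto
qed

lemma Dtop_topspace: "topspace (Dtop n A) = homs n A"
  unfolding Dtop_def homs_def by auto

lemma compact_space_Dtop:
  assumes "is_halg A"
  shows "compact_space (Dtop n A)"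
proof -
  have "compactin (product_topology (\<lambda>_. discrete_topology {..<n}) (hcar A)) (homs n A)"
    by (rule closedin_compact_space[OF _ homs_closedin[OF assms]])
       (simp add: compact_space_product_topology compact_space_discrete_topology)
  moreover have "homs n A \<subseteq> hcar A \<rightarrow>\<^sub>E {..<n}" by (auto simp: homs_def)
  ultimately show ?thesis
    by (simp add: compact_space_def Dtop_topspace Dtop_def compactin_subtopology Int_absorb1)
qed

lemma continuous_map_Dtop_eval:
  "a \<in> hcar A \<Longrightarrow> continuous_map (Dtop n A) (discrete_topology {..<n}) (\<lambda>x. x a)"
  unfolding Dtop_def
  by (rule continuous_map_from_subtopology[OF continuous_map_product_projection])

lemma openin_discrete_pair:
  assumes f: "continuous_map T (discrete_topology U) f"
    and g: "continuous_map T (discrete_topology V) g"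
  shows "openin T {z \<in> topspace T. P (f z) (g z)}"
proof -
  have "continuous_map T (discrete_topology (U \<times> V)) (\<lambda>z. (f z, g z))"
    using f g by (simp add: prod_topology_discrete_topology continuous_map_paired)
  then have "openin T {z \<in> topspace T. (f z, g z) \<in> {p \<in> U \<times> V. P (fst p) (snd p)}}"
    by (rule openin_continuous_map_preimage) simp
  moreover have "f z \<in> U" "g z \<in> V" if "z \<in> topspace T" for z
    using that continuous_map_image_subset_topspace[OF f] continuous_map_image_subset_topspace[OF g]
    by auto
  moreover have "{z \<in> topspace T. (f z, g z) \<in> {p \<in> U \<times> V. P (fst p) (snd p)}} =
      {z \<in> topspace T. P (f z) (g z)}"
    using calculation(2,3) by auto
  ultimately show ?thesis by simp
qed

section \<open>Morphisms from \<open>D(A)\<close> to the alter ego\<close>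

locale sigma_morphism =
  fixes n j :: nat and c :: "nat \<Rightarrow> bool" and A :: "'a halg" and \<phi> :: "('a \<Rightarrow> nat) \<Rightarrow> nat"
  assumes n_ge_4: "4 \<le> n" and j_range: "j \<in> {1..n-2}" and is_halg: "is_halg A"
    and phi_Edual: "\<phi> \<in> Edual n (sigma_ops n c j) (hcar A) (homs n A) (Dtop n A)"
begin

lemma phi_continuous: "continuous_map (Dtop n A) (discrete_topology {..<n}) \<phi>"
  using phi_Edual by (simp add: Edual_def is_morph_def)

lemma preserves_sigma_op: "(d, p) \<in> sigma_ops n c j \<Longrightarrow> preserves n A \<phi> d p"
  using phi_Edual unfolding Edual_def is_morph_def preserves_def by fast

lemma preserves_h_op: "preserves n A \<phi> {..<n} (h_op n j)"
  by (rule preserves_sigma_op) (simp add: sigma_ops_def)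

text \<open>Only one of \<open>f\<^sub>i\<close>, \<open>g\<^sub>i\<close> is an operation of the alter ego, but each is the inverse of the
  other, so \<open>\<phi>\<close> preserves both.\<close>
lemma preserves_f_g:
  assumes i: "i \<in> {1..n-3}"
  shows "preserves n A \<phi> ({..<n} - {i + 1}) (\<lambda>k. if k = i then i + 1 else k)" (is ?f)
    and "preserves n A \<phi> ({..<n} - {i}) (\<lambda>k. if k = i + 1 then i else k)" (is ?g)
proof -
  have "?f \<Longrightarrow> ?g"
    by (rule preserves_inverse[OF is_halg _ partial_endo_g[OF n_ge_4 i]])
       (use i in \<open>auto split: if_splits\<close>)
  moreover have "?g \<Longrightarrow> ?f"
    by (rule preserves_inverse[OF is_halg _ partial_endo_f[OF n_ge_4 i]])
       (use i n_ge_4 in \<open>auto split: if_splits\<close>)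
  moreover have "?f \<or> ?g"
    using i by (cases "c i") (auto intro!: preserves_sigma_op simp: sigma_ops_def f_op_def g_op_def)
  ultimately show ?f ?g by blast+
qed

lemma preserves_id_lessThan: "preserves n A \<phi> {..<n} id"
  unfolding preserves_def
proof (intro ballI impI conjI)
  fix x assume x: "x \<in> homs n A"
  show "\<phi> x \<in> {..<n}" using phi_Edual x by (auto simp: Edual_def)
  show "\<phi> (restrict (id \<circ> x) (hcar A)) = id (\<phi> x)"
    using homs_PiE[OF x] by (simp add: extensional_restrict)
qed

text \<open>The composite \<open>f\<^sub>i \<circ> g\<^sub>i\<close> is the identity on \<open>C\<^sub>n - {i}\<close>, and \<open>g\<^sub>i \<circ> f\<^sub>i\<close> the identity on
  \<open>C\<^sub>n - {i + 1}\<close>.\<close>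
lemma preserves_id_delete:
  assumes k: "k \<in> {1..n-2}"
  shows "preserves n A \<phi> ({..<n} - {k}) id"
proof (cases "k = 1")
  case True
  have i: "1 \<in> {1..n-3}" using n_ge_4 by auto
  show ?thesis
    using preserves_comp[OF is_halg partial_endo_g[OF n_ge_4 i] preserves_f_g(2)[OF i]
        preserves_f_g(1)[OF i]]
    by (rule preserves_cong) (use True n_ge_4 in auto)
next
  case False
  have i: "k - 1 \<in> {1..n-3}" and kk: "k - 1 + 1 = k" using n_ge_4 k False by auto
  show ?thesis
    using preserves_comp[OF is_halg partial_endo_f[OF n_ge_4 i] preserves_f_g(1)[OF i]
        preserves_f_g(2)[OF i], unfolded kk]
    by (rule preserves_cong) (use False k n_ge_4 in auto)
qed

lemma preserves_id_diff: "finite K \<Longrightarrow> K \<subseteq> {1..n-2} \<Longrightarrow> preserves n A \<phi> ({..<n} - K) id"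
proof (induction K rule: finite_induct)
  case empty
  show ?case using preserves_id_lessThan by (simp add: id_def)
next
  case (insert k K)
  have "partial_endo n ({..<n} - K) id" using insert.prems n_ge_4 by (intro partial_endo_id) force+
  moreover have "preserves n A \<phi> ({..<n} - K) id" using insert.IH insert.prems by blast
  moreover have "preserves n A \<phi> ({..<n} - {k}) id" using insert.prems preserves_id_delete by simp
  ultimately have "preserves n A \<phi> {s \<in> {..<n} - K. id s \<in> {..<n} - {k}} (id \<circ> id)"
    by (rule preserves_comp[OF is_halg])
  then show ?case by (rule preserves_cong) auto
qed

lemma preserves_id:
  assumes "D \<subseteq> {..<n}" "0 \<in> D" "n - 1 \<in> D"
  shows "preserves n A \<phi> D id"
proof -
  have "{..<n} - D \<subseteq> {1..n-2}"
  proof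
    fix k assume "k \<in> {..<n} - D"
    then have "k \<noteq> 0" "k \<noteq> n - 1" "k < n" using assms by (metis DiffD1 DiffD2 lessThan_iff)+
    then show "k \<in> {1..n-2}" by auto
  qed
  then show ?thesis
    using preserves_id_diff[of "{..<n} - D"] assms by (simp add: double_diff)
qed

lemma preserves_restrict:
  assumes "preserves n A \<phi> D' p" "D \<subseteq> D'" "D \<subseteq> {..<n}" "0 \<in> D" "n - 1 \<in> D"
  shows "preserves n A \<phi> D p"
  using preserves_comp[OF is_halg partial_endo_id[OF assms(3-5)] preserves_id[OF assms(3-5)]
      assms(1)]
  by (rule preserves_cong) (use assms in auto)

lemma shift_up_step:
  assumes u: "partial_endo n D u" "\<forall>s\<in>D. u s = n - 1 \<longrightarrow> s = n - 1"
    and up: "\<exists>t\<in>D. t < u t"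
  obtains p q where "partial_endo n D p" "preserves n A \<phi> D p" "partial_endo n (p ` D) q"
    "\<forall>t\<in>D. q (p t) = t" "displacement D u p < displacement D u id"
proof -
  have D: "D \<subseteq> {..<n}" "0 \<in> D" "n - 1 \<in> D" and u0: "u 0 = 0" and ut: "u (n - 1) = n - 1"
    and u_less: "\<And>s. s \<in> D \<Longrightarrow> u s < n"
    and u_imp: "\<And>s t. s \<in> D \<Longrightarrow> t \<in> D \<Longrightarrow> t < s \<Longrightarrow> u t < u s \<or> u t = n - 1"
    using u(1) unfolding partial_endo_def by auto
  have finD: "finite D" using D(1) finite_subset by blast
  then have fin: "finite {t \<in> D. t < u t}" by simp
  define s where "s = Max {t \<in> D. t < u t}"
  have sD: "s \<in> D" and su: "s < u s" using Max_in[OF fin] up by (auto simp: s_def)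
  have smax: "\<And>t. t \<in> D \<Longrightarrow> t < u t \<Longrightarrow> t \<le> s" using Max_ge[OF fin] by (auto simp: s_def)
  have "s \<noteq> n - 1" using su ut by auto
  then have us: "u s \<noteq> n - 1" using u(2) sD by auto
  have i: "s \<in> {1..n-3}" using su us u_less[OF sD] u0 by (cases "s = 0") auto
  have s1: "s + 1 \<notin> D"
  proof
    assume s1D: "s + 1 \<in> D"
    have "u s < u (s + 1)" using u_imp[OF s1D sD] us by auto
    then show False using smax[OF s1D] su by simp
  qed
  define p where "p = (\<lambda>k. if k = s then s + 1 else k)"
  define q where "q = (\<lambda>k. if k = s + 1 then s else k)"
  have D_sub: "D \<subseteq> {..<n} - {s + 1}" using D s1 by auto
  show thesis
  proof (rule that)
    show "partial_endo n D p"
      unfolding p_def by (rule partial_endo_subset[OF partial_endo_f[OF n_ge_4 i] D_sub D(2,3)])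
    show "preserves n A \<phi> D p"
      unfolding p_def by (rule preserves_restrict[OF preserves_f_g(1)[OF i] D_sub D])
    have "p ` D \<subseteq> {..<n} - {s}" "0 \<in> p ` D" "n - 1 \<in> p ` D"
      using D i \<open>s \<noteq> n - 1\<close> by (force simp: p_def)+
    then show "partial_endo n (p ` D) q"
      unfolding q_def by (rule partial_endo_subset[OF partial_endo_g[OF n_ge_4 i]])
    show "\<forall>t\<in>D. q (p t) = t" using s1 by (auto simp: p_def q_def)
    show "displacement D u p < displacement D u id"
      unfolding displacement_def
      by (rule sum_strict_mono_ex1) (use finD sD su in \<open>auto simp: p_def\<close>)
  qed
qed

lemma shift_down_step:
  assumes u: "partial_endo n D u" "\<forall>s\<in>D. u s = n - 1 \<longrightarrow> s = n - 1"
    and down: "\<exists>t\<in>D. u t < t"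
  obtains p q where "partial_endo n D p" "preserves n A \<phi> D p" "partial_endo n (p ` D) q"
    "\<forall>t\<in>D. q (p t) = t" "displacement D u p < displacement D u id"
proof -
  have D: "D \<subseteq> {..<n}" "0 \<in> D" "n - 1 \<in> D" and ut: "u (n - 1) = n - 1"
    and u_imp: "\<And>s t. s \<in> D \<Longrightarrow> t \<in> D \<Longrightarrow> t < s \<Longrightarrow> u t < u s \<or> u t = n - 1"
    using u(1) unfolding partial_endo_def by auto
  have finD: "finite D" using D(1) finite_subset by blast
  then have fin: "finite {t \<in> D. u t < t}" by simp
  define s where "s = Min {t \<in> D. u t < t}"
  have sD: "s \<in> D" and su: "u s < s" using Min_in[OF fin] down by (auto simp: s_def)
  have smin: "\<And>t. t \<in> D \<Longrightarrow> u t < t \<Longrightarrow> s \<le> t" using Min_le[OF fin] by (auto simp: s_def)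
  have s_top: "s \<noteq> n - 1" using su ut by auto
  have s1: "s - 1 \<notin> D"
  proof
    assume s1D: "s - 1 \<in> D"
    have "s - 1 \<noteq> n - 1" using sD D(1) su by auto
    then have "u (s - 1) < u s" using u_imp[OF sD s1D] u(2) s1D su by force
    then have "u (s - 1) < s - 1" using su by linarith
    then show False using smin[OF s1D] su by linarith
  qed
  define i where "i = s - 1"
  have si: "s = i + 1" using su by (simp add: i_def)
  have "i \<noteq> 0" using s1 D(2) by (metis i_def)
  then have i: "i \<in> {1..n-3}" using D sD s_top by (auto simp: i_def)
  define p where "p = (\<lambda>k. if k = i + 1 then i else k)"
  define q where "q = (\<lambda>k. if k = i then i + 1 else k)"
  have D_sub: "D \<subseteq> {..<n} - {i}" using D s1 by (auto simp: i_def)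
  show thesis
  proof (rule that)
    show "partial_endo n D p"
      unfolding p_def by (rule partial_endo_subset[OF partial_endo_g[OF n_ge_4 i] D_sub D(2,3)])
    show "preserves n A \<phi> D p"
      unfolding p_def by (rule preserves_restrict[OF preserves_f_g(2)[OF i] D_sub D])
    have "p ` D \<subseteq> {..<n} - {i + 1}" "0 \<in> p ` D" "n - 1 \<in> p ` D"
      using D i s_top si by (force simp: p_def)+
    then show "partial_endo n (p ` D) q"
      unfolding q_def by (rule partial_endo_subset[OF partial_endo_f[OF n_ge_4 i]])
    show "\<forall>t\<in>D. q (p t) = t" using s1 by (auto simp: p_def q_def i_def)
    show "displacement D u p < displacement D u id"
      unfolding displacement_def
      by (rule sum_strict_mono_ex1) (use finD sD su si in \<open>auto simp: p_def\<close>)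
  qed
qed

lemma preserves_top_reflecting:
  assumes "partial_endo n D u" "\<forall>s\<in>D. u s = n - 1 \<longrightarrow> s = n - 1"
  shows "preserves n A \<phi> D u"
  using assms
proof (induction "displacement D u id" arbitrary: D u rule: less_induct)
  case less
  have D: "D \<subseteq> {..<n}" "0 \<in> D" "n - 1 \<in> D" using less.prems(1) by (auto simp: partial_endo_def)
  show ?case
  proof (cases "\<forall>t\<in>D. u t = t")
    case True
    show ?thesis using preserves_id[OF D] by (rule preserves_cong) (use True in auto)
  next
    case False
    obtain p q where p: "partial_endo n D p" "preserves n A \<phi> D p"
      and q: "partial_endo n (p ` D) q" "\<forall>t\<in>D. q (p t) = t"
      and smaller: "displacement D u p < displacement D u id"
    proof (cases "\<exists>t\<in>D. t < u t")
      case True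
      show ?thesis using that by (rule shift_up_step[OF less.prems True])
    next
      case up: False
      have down: "\<exists>t\<in>D. u t < t" using False up by (meson linorder_neqE_nat)
      show ?thesis using that by (rule shift_down_step[OF less.prems down])
    qed
    have "inj_on p D" using q(2) by (metis inj_on_inverseI)
    then have "displacement (p ` D) (u \<circ> q) id = displacement D u p"
      using q(2) by (simp add: displacement_def sum.reindex)
    moreover have "partial_endo n (p ` D) (u \<circ> q)"
      using q less.prems(1) by (intro partial_endo_comp) force+
    moreover have "\<forall>s\<in>p ` D. (u \<circ> q) s = n - 1 \<longrightarrow> s = n - 1"
      using q(2) less.prems(2) p(1) by (auto simp: partial_endo_def)
    ultimately have "preserves n A \<phi> (p ` D) (u \<circ> q)" using less.hyps smaller by simp
    then show ?thesis by (rule preserves_factor[OF is_halg p]) (use q(2) in simp)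
  qed
qed

text \<open>\<open>r\<close> moves \<open>s\<close> to \<open>n - 2\<close> and then applies \<open>h\<^sub>j\<close>, which merges \<open>n - 2\<close> with the top;
  \<open>q\<close> undoes the shift performed by \<open>h\<^sub>j\<close> on the remaining elements.\<close>
lemma collapse_step:
  assumes D: "D \<subseteq> {..<n}" "0 \<in> D" "n - 1 \<in> D"
    and s: "s \<in> D" "1 \<le> s" "s \<le> n - 2" and smax: "\<And>t. t \<in> D \<Longrightarrow> t \<noteq> n - 1 \<Longrightarrow> t \<le> s"
  obtains r q where "partial_endo n D r" "preserves n A \<phi> D r" "partial_endo n (r ` D) q"
    "\<forall>t\<in>D. q (r t) = (if t = s then n - 1 else t)" "card (r ` D) < card D"
proof -
  define p where "p = (\<lambda>k. if k = s then n - 2 else k)"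
  define q where "q = (\<lambda>t. if t = n - 1 then n - 1 else if j < t then t - 1 else t)"
  have p: "partial_endo n D p"
    unfolding p_def by (rule partial_endo_raise_max[OF D s(2,3) smax])
  have pD: "p ` D \<subseteq> {..<n}" using p by (auto simp: partial_endo_def)
  have "\<forall>t\<in>D. p t = n - 1 \<longrightarrow> t = n - 1" using n_ge_4 by (auto simp: p_def)
  then have "preserves n A \<phi> D p" by (rule preserves_top_reflecting[OF p])
  from preserves_comp[OF is_halg p this preserves_h_op]
  have r_pres: "preserves n A \<phi> D (h_op n j \<circ> p)"
    by (rule preserves_cong) (use pD in auto)
  have r: "partial_endo n D (h_op n j \<circ> p)"
    using partial_endo_comp[OF p partial_endo_h_op[OF n_ge_4 j_range] pD] .
  have rD: "(h_op n j \<circ> p) ` D \<subseteq> {..<n}" "0 \<in> (h_op n j \<circ> p) ` D" "n - 1 \<in> (h_op n j \<circ> p) ` D"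
    using r by (auto simp: partial_endo_def dest: bspec) (metis image_eqI)+
  have "j \<notin> (h_op n j \<circ> p) ` D"
    using j_range D s by (auto simp: p_def h_op_def split: if_splits)
  then have q: "partial_endo n ((h_op n j \<circ> p) ` D) q"
    unfolding q_def by (rule partial_endo_h_op_inverse[OF rD]) (use j_range in simp)
  have qr: "q ((h_op n j \<circ> p) t) = (if t = s then n - 1 else t)" if t: "t \<in> D" for t
  proof (cases "t = s \<or> t = n - 1")
    case True
    then show ?thesis using j_range n_ge_4 by (auto simp: q_def p_def h_op_def)
  next
    case False
    then have "t < s" using smax[OF t] by auto
    then show ?thesis using False j_range n_ge_4 s by (auto simp: q_def p_def h_op_def)
  qed
  have "\<not> inj_on (h_op n j \<circ> p) D"
  proof
    assume "inj_on (h_op n j \<circ> p) D"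
    moreover have "(h_op n j \<circ> p) s = (h_op n j \<circ> p) (n - 1)"
      using j_range n_ge_4 s by (auto simp: p_def h_op_def)
    moreover have "s \<noteq> n - 1" using s n_ge_4 by auto
    ultimately show False using s(1) D(3) by (metis inj_onD)
  qed
  moreover have "finite D" using D(1) finite_subset by blast
  ultimately have "card ((h_op n j \<circ> p) ` D) < card D"
    using card_image_le inj_on_iff_eq_card le_neq_implies_less by metis
  then show thesis using that[OF r r_pres q] qr by blast
qed

lemma preserves_partial_endo:
  assumes "partial_endo n D u"
  shows "preserves n A \<phi> D u"
  using assms
proof (induction "card D" arbitrary: D u rule: less_induct)
  case less
  have D: "D \<subseteq> {..<n}" "0 \<in> D" "n - 1 \<in> D" and u0: "u 0 = 0" and ut: "u (n - 1) = n - 1"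
    and u_less: "\<And>s. s \<in> D \<Longrightarrow> u s < n"
    and u_mono: "\<And>s t. s \<in> D \<Longrightarrow> t \<in> D \<Longrightarrow> s \<le> t \<Longrightarrow> u s \<le> u t"
    using less.prems unfolding partial_endo_def by auto
  show ?case
  proof (cases "\<forall>s\<in>D. u s = n - 1 \<longrightarrow> s = n - 1")
    case True
    then show ?thesis using preserves_top_reflecting[OF less.prems] by blast
  next
    case False
    then obtain s0 where s0: "s0 \<in> D" "s0 \<noteq> n - 1" "u s0 = n - 1" by blast
    have fin: "finite (D - {n - 1})" using D(1) finite_subset by blast
    define s where "s = Max (D - {n - 1})"
    have s: "s \<in> D" "s \<noteq> n - 1" using Max_in[OF fin] s0 by (auto simp: s_def)
    have smax: "\<And>t. t \<in> D \<Longrightarrow> t \<noteq> n - 1 \<Longrightarrow> t \<le> s" using Max_ge[OF fin] by (auto simp: s_def)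
    have us: "u s = n - 1"
      using u_mono[OF s0(1) s(1) smax[OF s0(1,2)]] u_less[OF s(1)] s0(3) by linarith
    then have "s \<noteq> 0" using u0 n_ge_4 by (intro notI) simp
    moreover have "s \<le> n - 2" using s D by auto
    ultimately obtain r q where r: "partial_endo n D r" "preserves n A \<phi> D r"
      and q: "partial_endo n (r ` D) q" "\<forall>t\<in>D. q (r t) = (if t = s then n - 1 else t)"
      and smaller: "card (r ` D) < card D"
      using collapse_step[OF D s(1) _ _ smax] by (metis One_nat_def Suc_leI neq0_conv)
    have "partial_endo n (r ` D) (u \<circ> q)"
      using q less.prems D by (intro partial_endo_comp) (auto split: if_splits)
    then have "preserves n A \<phi> (r ` D) (u \<circ> q)" using less.hyps smaller by blast
    then show ?thesis by (rule preserves_factor[OF is_halg r]) (use q(2) us ut in auto)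
  qed
qed

lemma phi_in_image:
  assumes x: "x \<in> homs n A"
  shows "\<phi> x \<in> x ` hcar A"
proof -
  have "partial_endo n (x ` hcar A) id" using homs_image[OF x is_halg] by (intro partial_endo_id)
  then show ?thesis using preserves_partial_endo x unfolding preserves_def by blast
qed

lemma phi_comp:
  assumes x: "x \<in> homs n A" and u: "partial_endo n (x ` hcar A) u"
  shows "\<phi> (restrict (u \<circ> x) (hcar A)) = u (\<phi> x)"
  using preserves_partial_endo[OF u] x unfolding preserves_def by blast

lemma phi_interpolates_pair:
  assumes x: "x \<in> homs n A" and y: "y \<in> homs n A"
  shows "\<exists>a\<in>hcar A. x a = \<phi> x \<and> y a = \<phi> y"
proof -
  interpret homs_pair n A x y using is_halg x y by unfold_locales
  define s0 where "s0 = lower_cut n A x y"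
  obtain b where b: "b \<in> hcar A" "x b = \<phi> x" using phi_in_image[OF x] by auto
  obtain c where c: "c \<in> hcar A" "y c = \<phi> y" using phi_in_image[OF y] by auto
  have "cutoff n s0 (\<phi> x) = cutoff n s0 (x c)" if s0: "0 < s0"
  proof -
    obtain v where v: "partial_endo n (y ` hcar A) v"
      "\<And>a. a \<in> hcar A \<Longrightarrow> v (y a) = cutoff n s0 (x a)"
      using cutoff_factors_through s0 unfolding s0_def by blast
    have "partial_endo n (x ` hcar A) (cutoff n s0)"
      using homs_image[OF x is_halg] s0 lower_cut_le_top
      by (intro partial_endo_cutoff) (auto simp: s0_def)
    then have "cutoff n s0 (\<phi> x) = \<phi> (restrict (cutoff n s0 \<circ> x) (hcar A))"
      by (simp add: phi_comp[OF x])
    also have "restrict (cutoff n s0 \<circ> x) (hcar A) = restrict (v \<circ> y) (hcar A)"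
      using v(2) by (auto intro!: restrict_ext)
    also have "\<phi> \<dots> = v (\<phi> y)" by (rule phi_comp[OF y v(1)])
    finally show ?thesis using v(2)[OF c(1)] c(2) by simp
  qed
  moreover have "s0 \<le> n - 1" using lower_cut_le_top by (simp add: s0_def)
  ultimately consider "s0 \<le> \<phi> x" "s0 \<le> x c" | "\<phi> x < s0" "x c = \<phi> x"
    by (cases "s0 = 0") (auto simp: cutoff_def split: if_splits)
  then show ?thesis
  proof cases
    case 1
    have "lower_cut n A y x \<le> y c" using lower_cut_reflect[OF c(1)] 1(2) by (simp add: s0_def)
    then show ?thesis
      using upper_block_attained[OF b(1) _ c(1)] 1(1) b(2) c(2) by (simp add: s0_def)
  next
    case 2
    then show ?thesis using c by blast
  qed
qed

lemma phi_finite_subcover: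
  assumes f: "\<And>y. y \<in> homs n A \<Longrightarrow> f y \<in> hcar A"
    and R: "\<And>y. y \<in> homs n A \<Longrightarrow> R (y (f y)) (\<phi> y)"
  obtains G where "finite G" "G \<subseteq> homs n A" "\<And>z. z \<in> homs n A \<Longrightarrow> \<exists>y\<in>G. R (z (f y)) (\<phi> z)"
proof -
  define W where "W y = {z \<in> topspace (Dtop n A). R (z (f y)) (\<phi> z)}" for y
  have "compactin (Dtop n A) (homs n A)"
    using compact_space_Dtop[OF is_halg] by (simp add: compact_space_def Dtop_topspace)
  moreover have "openin (Dtop n A) (W y)" if "y \<in> homs n A" for y
    unfolding W_def
    by (rule openin_discrete_pair[OF continuous_map_Dtop_eval[OF f[OF that]] phi_continuous])
  then have "\<forall>S\<in>W ` homs n A. openin (Dtop n A) S" by blast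
  moreover have "homs n A \<subseteq> \<Union>(W ` homs n A)" using R by (force simp: W_def Dtop_topspace)
  ultimately obtain F where F: "finite F" "F \<subseteq> W ` homs n A" "homs n A \<subseteq> \<Union>F"
    unfolding compactin_def by meson
  then obtain G where G: "G \<subseteq> homs n A" "finite G" "F = W ` G" by (meson finite_subset_image)
  show thesis
  proof (rule that[OF G(2,1)])
    fix z assume "z \<in> homs n A"
    then obtain y where "y \<in> G" "z \<in> W y" using F(3) G(3) by blast
    then show "\<exists>y\<in>G. R (z (f y)) (\<phi> z)" by (auto simp: W_def)
  qed
qed

lemma phi_lower_interpolant:
  assumes x: "x \<in> homs n A"
  shows "\<exists>b\<in>hcar A. x b = \<phi> x \<and> (\<forall>z\<in>homs n A. z b \<le> \<phi> z)"
proof -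
  have "\<forall>y\<in>homs n A. \<exists>a. a \<in> hcar A \<and> x a = \<phi> x \<and> y a = \<phi> y"
    using phi_interpolates_pair[OF x] by blast
  then obtain a where a: "\<And>y. y \<in> homs n A \<Longrightarrow> a y \<in> hcar A \<and> x (a y) = \<phi> x \<and> y (a y) = \<phi> y"
    by (metis bchoice)
  obtain G where G: "finite G" "G \<subseteq> homs n A"
    and cover: "\<And>z. z \<in> homs n A \<Longrightarrow> \<exists>y\<in>G. z (a y) \<le> \<phi> z"
    by (rule phi_finite_subcover[of a "(\<le>)"]) (use a in auto)
  have "G \<noteq> {}" using cover[OF x] by blast
  then obtain b where b: "b \<in> hcar A" "\<forall>z\<in>homs n A. z b = (MIN y\<in>G. z (a y))"
    using homs_meet_exists[OF is_halg G(1)] a G(2) by blast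
  have "x b = (MIN y\<in>G. x (a y))" using b(2) x by blast
  also have "(\<lambda>y. x (a y)) ` G = {\<phi> x}" using a G(2) \<open>G \<noteq> {}\<close> by (force simp: subset_iff)
  finally have "x b = \<phi> x" by simp
  moreover have "z b \<le> \<phi> z" if z: "z \<in> homs n A" for z
  proof -
    obtain y where y: "y \<in> G" "z (a y) \<le> \<phi> z" using cover[OF z] by blast
    have "z b = (MIN y\<in>G. z (a y))" using b(2) z by simp
    also have "\<dots> \<le> z (a y)" by (rule Min_le) (use y(1) G(1) in auto)
    finally show ?thesis using y(2) by simp
  qed
  ultimately show ?thesis using b(1) by blast
qed

lemma phi_eq_eval:
  assumes "homs n A \<noteq> {}"
  shows "\<exists>a\<in>hcar A. \<forall>z\<in>homs n A. z a = \<phi> z"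
proof -
  have "\<forall>x\<in>homs n A. \<exists>b. b \<in> hcar A \<and> x b = \<phi> x \<and> (\<forall>z\<in>homs n A. z b \<le> \<phi> z)"
    using phi_lower_interpolant by blast
  then obtain b where b: "\<And>x. x \<in> homs n A \<Longrightarrow>
      b x \<in> hcar A \<and> x (b x) = \<phi> x \<and> (\<forall>z\<in>homs n A. z (b x) \<le> \<phi> z)"
    by (metis bchoice)
  obtain G where G: "finite G" "G \<subseteq> homs n A"
    and cover: "\<And>z. z \<in> homs n A \<Longrightarrow> \<exists>y\<in>G. \<phi> z \<le> z (b y)"
    by (rule phi_finite_subcover[of b "\<lambda>s t. t \<le> s"]) (use b in auto)
  have "G \<noteq> {}" using cover assms by blast
  then obtain a where a: "a \<in> hcar A" "\<forall>z\<in>homs n A. z a = Max ((\<lambda>y. z (b y)) ` G)"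
    using homs_join_exists[OF is_halg G(1)] b G(2) by blast
  have "z a = \<phi> z" if z: "z \<in> homs n A" for z
  proof (rule antisym)
    have le: "\<forall>y\<in>G. z (b y) \<le> \<phi> z" using b G(2) z by blast
    have "z a = (MAX y\<in>G. z (b y))" using a(2) z by blast
    also have "\<dots> \<le> \<phi> z" by (subst Max_le_iff) (use le G(1) \<open>G \<noteq> {}\<close> in auto)
    finally show "z a \<le> \<phi> z" .
    obtain y where y: "y \<in> G" "\<phi> z \<le> z (b y)" using cover[OF z] by blast
    note y(2)
    also have "z (b y) \<le> (MAX y\<in>G. z (b y))" by (rule Max_ge) (use y(1) G(1) in auto)
    also have "\<dots> = z a" using a(2) z by simp
    finally show "\<phi> z \<le> z a" .
  qed
  then show ?thesis using a(1) by blast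
qed

lemma phi_in_ev_image: "\<phi> \<in> ev (homs n A) ` hcar A"
proof (cases "homs n A = {}")
  case True
  then have "\<phi> = ev (homs n A) (hbot A)"
    using phi_Edual by (simp add: Edual_def ev_def restrict_def)
  then show ?thesis using halg_bot_in[OF is_halg] by blast
next
  case False
  then obtain a where a: "a \<in> hcar A" "\<forall>z\<in>homs n A. z a = \<phi> z" using phi_eq_eval by blast
  have "\<phi> \<in> homs n A \<rightarrow>\<^sub>E {..<n}" using phi_Edual by (simp add: Edual_def)
  then have "ev (homs n A) a = \<phi>" using a by (auto simp: ev_def PiE_def extensional_def)
  then show ?thesis using a(1) by blast
qed

end

section \<open>The evaluation map\<close>

lemma ev_hhom:
  assumes A: "is_halg A"
  shows "hhom A (cpow n (homs n A)) (ev (homs n A))"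
  unfolding hhom_def
proof (intro conjI ballI)
  fix a assume "a \<in> hcar A"
  then show "ev (homs n A) a \<in> hcar (cpow n (homs n A))"
    using homs_less by (auto simp: cpow_def ev_def)
next
  show "ev (homs n A) (hbot A) = hbot (cpow n (homs n A))"
    "ev (homs n A) (htop A) = htop (cpow n (homs n A))"
    unfolding cpow_def ev_def by (auto intro!: restrict_ext simp: Cn_def homs_bot homs_top)
next
  fix a b assume a: "a \<in> hcar A" and b: "b \<in> hcar A"
  show "ev (homs n A) (hmeet A a b) = hmeet (cpow n (homs n A)) (ev (homs n A) a) (ev (homs n A) b)"
    "ev (homs n A) (hjoin A a b) = hjoin (cpow n (homs n A)) (ev (homs n A) a) (ev (homs n A) b)"
    "ev (homs n A) (himp A a b) = himp (cpow n (homs n A)) (ev (homs n A) a) (ev (homs n A) b)"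
    unfolding cpow_def ev_def
    by (auto intro!: restrict_ext
        simp: Cn_def homs_meet[OF _ a b] homs_join[OF _ a b] homs_imp[OF _ a b])
qed

lemma ev_in_Edual:
  assumes n: "4 \<le> n" "j \<in> {1..n-2}" and A: "is_halg A" and a: "a \<in> hcar A"
  shows "ev (homs n A) a \<in> Edual n (sigma_ops n c j) (hcar A) (homs n A) (Dtop n A)"
proof -
  have "continuous_map (Dtop n A) (discrete_topology {..<n}) (ev (homs n A) a)"
    by (rule continuous_map_eq[OF continuous_map_Dtop_eval[OF a]]) (simp add: Dtop_topspace ev_def)
  moreover have "\<forall>(d, p)\<in>sigma_ops n c j. \<forall>x\<in>homs n A. x ` hcar A \<subseteq> d \<longrightarrow>
      ev (homs n A) a x \<in> d \<and> ev (homs n A) a (restrict (p \<circ> x) (hcar A)) = p (ev (homs n A) a x)"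
  proof (intro ballI impI, clarify)
    fix d p x assume dp: "(d, p) \<in> sigma_ops n c j" and x: "x \<in> homs n A" and xd: "x ` hcar A \<subseteq> d"
    have "restrict (p \<circ> x) (hcar A) \<in> homs n A"
      by (rule partial_endo_comp_homs[OF x A xd partial_endo_sigma_ops[OF n dp]])
    then show "ev (homs n A) a x \<in> d \<and>
        ev (homs n A) a (restrict (p \<circ> x) (hcar A)) = p (ev (homs n A) a x)"
      using xd a x by (auto simp: ev_def)
  qed
  moreover have "ev (homs n A) a \<in> homs n A \<rightarrow>\<^sub>E {..<n}" using homs_less a by (auto simp: ev_def)
  ultimately show ?thesis by (simp add: Edual_def is_morph_def)
qed

lemma hhom_cpow_proj_homs:
  assumes A: "is_halg A" and emb: "hhom A (cpow n I) emb" and i: "i \<in> I"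
  shows "restrict (\<lambda>a. emb a i) (hcar A) \<in> homs n A"
  unfolding homs_def hhom_def
proof (intro CollectI conjI ballI)
  have emb_PiE: "emb a \<in> I \<rightarrow>\<^sub>E {..<n}" if "a \<in> hcar A" for a
    using emb that by (auto simp: hhom_def cpow_def)
  then show "restrict (\<lambda>a. emb a i) (hcar A) \<in> hcar A \<rightarrow>\<^sub>E {..<n}" using i by auto
  fix a assume "a \<in> hcar A"
  then show "restrict (\<lambda>a. emb a i) (hcar A) a \<in> hcar (Cn n)"
    using emb_PiE i by (auto simp: Cn_def)
next
  show "restrict (\<lambda>a. emb a i) (hcar A) (hbot A) = hbot (Cn n)"
    "restrict (\<lambda>a. emb a i) (hcar A) (htop A) = htop (Cn n)"
    using emb i halg_bot_in[OF A] halg_top_in[OF A] by (auto simp: hhom_def cpow_def Cn_def)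
next
  fix a b assume a: "a \<in> hcar A" and b: "b \<in> hcar A"
  have "emb (hmeet A a b) = hmeet (cpow n I) (emb a) (emb b)"
    "emb (hjoin A a b) = hjoin (cpow n I) (emb a) (emb b)"
    "emb (himp A a b) = himp (cpow n I) (emb a) (emb b)"
    using emb a b unfolding hhom_def by auto
  then show "restrict (\<lambda>a. emb a i) (hcar A) (hmeet A a b) =
      hmeet (Cn n) (restrict (\<lambda>a. emb a i) (hcar A) a) (restrict (\<lambda>a. emb a i) (hcar A) b)"
    "restrict (\<lambda>a. emb a i) (hcar A) (hjoin A a b) =
      hjoin (Cn n) (restrict (\<lambda>a. emb a i) (hcar A) a) (restrict (\<lambda>a. emb a i) (hcar A) b)"
    "restrict (\<lambda>a. emb a i) (hcar A) (himp A a b) =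
      himp (Cn n) (restrict (\<lambda>a. emb a i) (hcar A) a) (restrict (\<lambda>a. emb a i) (hcar A) b)"
    using a b i halg_meet_in[OF A a b] halg_join_in[OF A a b] halg_imp_in[OF A a b]
    by (simp_all add: cpow_def)
qed

lemma ev_inj_on:
  assumes A: "is_halg A" and emb: "hhom A (cpow n I) emb" "inj_on emb (hcar A)"
  shows "inj_on (ev (homs n A)) (hcar A)"
proof (rule inj_onI, rule ccontr)
  fix a b assume a: "a \<in> hcar A" and b: "b \<in> hcar A" and ev: "ev (homs n A) a = ev (homs n A) b"
    and "a \<noteq> b"
  then have "emb a \<noteq> emb b" using emb(2) by (meson inj_onD)
  moreover have "emb a \<in> I \<rightarrow>\<^sub>E {..<n}" "emb b \<in> I \<rightarrow>\<^sub>E {..<n}"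
    using emb(1) a b by (auto simp: hhom_def cpow_def)
  ultimately obtain i where i: "i \<in> I" "emb a i \<noteq> emb b i" by (metis PiE_ext)
  have "restrict (\<lambda>a. emb a i) (hcar A) \<in> homs n A" by (rule hhom_cpow_proj_homs[OF A emb(1) i(1)])
  then have "ev (homs n A) a (restrict (\<lambda>a. emb a i) (hcar A)) \<noteq>
      ev (homs n A) b (restrict (\<lambda>a. emb a i) (hcar A))"
    using a b i(2) by (simp add: ev_def)
  then show False using ev by metis
qed

theorem theorem3p3:
  fixes n j :: nat and c :: "nat \<Rightarrow> bool" and A :: "'a halg"
    and I :: "'i set" and emb :: "'a \<Rightarrow> 'i \<Rightarrow> nat"
  assumes "n \<ge> 4"
    and "j \<in> {1..n-2}"
    and "is_halg A" and "hhom A (cpow n I) emb" and "inj_on emb (hcar A)"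
  shows "hhom A (cpow n (homs n A)) (ev (homs n A)) \<and>
         bij_betw (ev (homs n A)) (hcar A)
           (Edual n (sigma_ops n c j) (hcar A) (homs n A) (Dtop n A))"
proof -
  let ?E = "Edual n (sigma_ops n c j) (hcar A) (homs n A) (Dtop n A)"
  have "?E \<subseteq> ev (homs n A) ` hcar A"
  proof
    fix \<phi> assume "\<phi> \<in> ?E"
    then interpret sigma_morphism n j c A \<phi> using assms by unfold_locales
    show "\<phi> \<in> ev (homs n A) ` hcar A" by (rule phi_in_ev_image)
  qed
  moreover have "ev (homs n A) ` hcar A \<subseteq> ?E"
    by (rule image_subsetI) (rule ev_in_Edual[OF assms(1-3)])
  ultimately show ?thesis
    using ev_hhom[OF assms(3)] ev_inj_on[OF assms(3-5)] by (simp add: bij_betw_def)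
qed

end
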